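(* Suppose $\mathbf{X}=\mathbf{D}_1\boldsymbol{\Gamma}_1$, $\boldsymbol{\Gamma}_{i-1}=\mathbf{D}_i\boldsymbol{\Gamma}_i$ for $2\le i\le K$, all $\boldsymbol{\Gamma}_i\neq0$, and $\mathbf{Y}=\mathbf{X}+\mathbf{E}$ with $\|\mathbf{E}\|_{2,\infty}^{p}\le\epsilon_0$. Let $|\Gamma_i^{\min}|,|\Gamma_i^{\max}|$ be the smallest and largest absolute values of the nonzero entries of $\boldsymbol{\Gamma}_i$. Let $\hat{\boldsymbol{\Gamma}}_0=\mathbf{Y}$ and $\hat{\boldsymbol{\Gamma}}_i=\mathcal{S}_{\beta_i}(\mathbf{D}_i^T\hat{\boldsymbol{\Gamma}}_{i-1})$ for $1\le i\le K$ (layered soft thresholding). Define recursively $$\epsilon_i=\sqrt{\|\boldsymbol{\Gamma}_i\|_{0,\infty}^{p}}\,\big(\epsilon_{i-1}+\mu(\mathbf{D}_i)(\|\boldsymbol{\Gamma}_i\|_{0,\infty}^{s}-1)|\Gamma_i^{\max}|+\beta_i\big).$$ Assume that for all $1\le i\le K$: (a) $\|\boldsymbol{\Gamma}_i\|_{0,\infty}^{s}<\tfrac12\Big(1+\tfrac{1}{\mu(\mathbf{D}_i)}\tfrac{|\Gamma_i^{\min}|}{|\Gamma_i^{\max}|}\Big)-\tfrac{1}{\mu(\mathbf{D}_i)}\tfrac{\epsilon_{i-1}}{|\Gamma_i^{\max}|}$; and (b) $|\Gamma_i^{\min}|-(\|\boldsymbol{\Gamma}_i\|_{0,\infty}^{s}-1)\mu(\mathbf{D}_i)|\Gamma_i^{\max}|-\epsilon_{i-1}>\beta_i>\|\boldsymbol{\Gamma}_i\|_{0,\infty}^{s}\mu(\mathbf{D}_i)|\Gamma_i^{\max}|+\epsilon_{i-1}$.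 Then for all $1\le i\le K$: (1) the support of $\hat{\boldsymbol{\Gamma}}_i$ equals that of $\boldsymbol{\Gamma}_i$; and (2) $\|\boldsymbol{\Gamma}_i-\hat{\boldsymbol{\Gamma}}_i\|_{2,\infty}^{p}\le\epsilon_i$.
   Context: Setting. Signals are one-dimensional of length $N$ with periodic boundary conditions; $m_0=1$, $\boldsymbol{\Gamma}_0=\mathbf{X}$. For $i\ge1$, $\boldsymbol{\Gamma}_i\in\mathbb{R}^{Nm_i}$ has entry $km_i+r$ equal to the coefficient of filter $r$ at spatial shift $k$. $\mathbf{D}_i\in\mathbb{R}^{Nm_{i-1}\times Nm_i}$ is a (stride) convolutional dictionary whose column $km_i+r$ is local filter $r$ (length $n_{i-1}m_{i-1}$) placed cyclically on entries $km_{i-1},\dots,km_{i-1}+n_{i-1}m_{i-1}-1$, zero elsewhere. Columns have unit $\ell_2$ norm; $\mu(\mathbf{D})=\max_{i\neq j}|\mathbf{d}_i^T\mathbf{d}_j|$. Stripes: $\mathbf{S}_{i,j}\boldsymbol{\Gamma}_i$ is the subvector of $\boldsymbol{\Gamma}_i$ at spatial shifts $k\in\{j-n_{i-1}+1,\dots,j+n_{i-1}-1\}$ (mod $N$), all channels; $\|\boldsymbol{\Gamma}_i\|_{0,\infty}^{s}=\max_j\|\mathbf{S}_{i,j}\boldsymbol{\Gamma}_i\|_0$. Patches: for $i\ge0$, $\mathbf{P}_{i,j}\mathbf{V}$ extracts from $\mathbf{V}\in\mathbb{R}^{Nm_i}$ the cyclically contiguous subvector at spatial shifts $j,\dots,j+n_i-1$,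 all channels (length $n_im_i$); $\|\mathbf{V}\|_{2,\infty}^{p}=\max_j\|\mathbf{P}_{i,j}\mathbf{V}\|_2$, $\|\mathbf{V}\|_{0,\infty}^{p}=\max_j\|\mathbf{P}_{i,j}\mathbf{V}\|_0$. For $\boldsymbol{\Gamma}_K$ the patch size $n_K$ is an arbitrary fixed choice. Soft thresholding: $\mathcal{S}_\beta$ acts entrywise, $\mathcal{S}_\beta(z)=z+\beta$ if $z<-\beta$, $0$ if $|z|\le\beta$, $z-\beta$ if $z>\beta$. *)

theory Defs
  imports Main "HOL-Library.Multiset" Complex_Main
begin

text \<open>Vectors in R^(N*m) are functions nat => real, meaningful on indices < N*m.
  Entry k*m + r = channel r at spatial shift k.  Matrices are nat => nat => real (row, column).\<close>

definition cyc_window :: "nat \<Rightarrow> nat \<Rightarrow> int \<Rightarrow> int \<Rightarrow> nat set" where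
  "cyc_window N j a b = {k. k < N \<and> (\<exists>d::int. a \<le> d \<and> d \<le> b \<and> int k = (int j + d) mod int N)}"

definition coords :: "nat \<Rightarrow> nat \<Rightarrow> nat set \<Rightarrow> nat set" where
  "coords N m W = {idx. idx < N * m \<and> idx div m \<in> W}"

text \<open>Stripe S_{i,j}: shifts j-n+1 .. j+n-1, where n = n_{i-1}.\<close>
definition stripe :: "nat \<Rightarrow> nat \<Rightarrow> nat \<Rightarrow> nat \<Rightarrow> nat set" where
  "stripe N m n j = coords N m (cyc_window N j (-(int n - 1)) (int n - 1))"

text \<open>Patch P_{i,j}: shifts j .. j+n-1, where n = n_i.\<close>
definition patch :: "nat \<Rightarrow> nat \<Rightarrow> nat \<Rightarrow> nat \<Rightarrow> nat set" where
  "patch N m n j = coords N m (cyc_window N j 0 (int n - 1))"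

definition stripe_l0 :: "nat \<Rightarrow> nat \<Rightarrow> nat \<Rightarrow> (nat \<Rightarrow> real) \<Rightarrow> nat" where
  "stripe_l0 N m n V = Max ((\<lambda>j. card {idx \<in> stripe N m n j. V idx \<noteq> 0}) ` {..<N})"

definition patch_l0 :: "nat \<Rightarrow> nat \<Rightarrow> nat \<Rightarrow> (nat \<Rightarrow> real) \<Rightarrow> nat" where
  "patch_l0 N m n V = Max ((\<lambda>j. card {idx \<in> patch N m n j. V idx \<noteq> 0}) ` {..<N})"

definition patch_l2 :: "nat \<Rightarrow> nat \<Rightarrow> nat \<Rightarrow> (nat \<Rightarrow> real) \<Rightarrow> real" where
  "patch_l2 N m n V = Max ((\<lambda>j. sqrt (\<Sum>idx \<in> patch N m n j. (V idx)\<^sup>2)) ` {..<N})"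

definition mutual_coh :: "nat \<Rightarrow> nat \<Rightarrow> (nat \<Rightarrow> nat \<Rightarrow> real) \<Rightarrow> real" where
  "mutual_coh R C D = Max (insert 0 {\<bar>\<Sum>row<R. D row a * D row b\<bar> | a b. a < C \<and> b < C \<and> a \<noteq> b})"

text \<open>Stride convolutional dictionary in R^{(N*mp) x (N*mc)} with local filters of length np*mp
  (column k*mc + r is filter r placed cyclically on rows k*mp, ..., k*mp + np*mp - 1),
  with unit l2-norm columns.\<close>
definition conv_dict :: "nat \<Rightarrow> nat \<Rightarrow> nat \<Rightarrow> nat \<Rightarrow> (nat \<Rightarrow> nat \<Rightarrow> real) \<Rightarrow> bool" where
  "conv_dict N mp mc np D \<longleftrightarrow>
     (\<exists>f :: nat \<Rightarrow> nat \<Rightarrow> real. \<forall>k<N. \<forall>r<mc. \<forall>row<N*mp.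
        D row (k*mc + r) =
          (let t = nat ((int row - int (k*mp)) mod int (N*mp)) in if t < np*mp then f r t else 0))
   \<and> (\<forall>c<N*mc. (\<Sum>row<N*mp. (D row c)\<^sup>2) = 1)"

definition mat_vec :: "nat \<Rightarrow> (nat \<Rightarrow> nat \<Rightarrow> real) \<Rightarrow> (nat \<Rightarrow> real) \<Rightarrow> (nat \<Rightarrow> real)" where
  "mat_vec C D v = (\<lambda>row. \<Sum>c<C. D row c * v c)"

definition mat_tvec :: "nat \<Rightarrow> (nat \<Rightarrow> nat \<Rightarrow> real) \<Rightarrow> (nat \<Rightarrow> real) \<Rightarrow> (nat \<Rightarrow> real)" where
  "mat_tvec R D v = (\<lambda>c. \<Sum>row<R. D row c * v row)"

definition soft_thr :: "real \<Rightarrow> real \<Rightarrow> real" where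
  "soft_thr \<beta> z = (if z < -\<beta> then z + \<beta> else if z > \<beta> then z - \<beta> else 0)"

definition abs_min_nz :: "nat \<Rightarrow> (nat \<Rightarrow> real) \<Rightarrow> real" where
  "abs_min_nz L V = Min {\<bar>V idx\<bar> | idx. idx < L \<and> V idx \<noteq> 0}"

definition abs_max_nz :: "nat \<Rightarrow> (nat \<Rightarrow> real) \<Rightarrow> real" where
  "abs_max_nz L V = Max {\<bar>V idx\<bar> | idx. idx < L \<and> V idx \<noteq> 0}"

end

theory Submission
  imports Defs "HOL-Analysis.Convex"
begin

text \<open>Correlating the previous estimate with the dictionary gives, in entry c, the true
  coefficient Gamma_i(c), plus interference from the other atoms, plus the correlation of atom c
  with the previous error. Only atoms overlapping atom c, i.e. those in its stripe, interfere,
  each by at most mu |Gamma_i^max|; and since atom c is a unit vector supported in a single patch,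
  Cauchy-Schwarz bounds the noise term by the previous patch error epsilon_(i-1). Condition (b)
  places beta_i strictly between the largest perturbed off-support entry and the smallest
  perturbed on-support entry, so soft thresholding keeps exactly the true support and moves each
  kept entry by at most beta_i. Summing the squared entrywise errors over the at most
  ||Gamma_i||^p_(0,inf) nonzero entries of a patch gives epsilon_i, and induction over the layers
  finishes the proof.\<close>

section \<open>Geometry of convolutional dictionaries\<close>

lemma conv_dict_nonzero_row:
  assumes cd: "conv_dict N mp mc np D" and c: "c < N * mc" and row: "row < N * mp"
    and nz: "D row c \<noteq> 0" and mp: "mp \<ge> 1" and mc: "mc \<ge> 1"
  shows "\<exists>d<np. row div mp = (c div mc + d) mod N"
proof -
  from cd obtain f where f: "\<forall>k<N. \<forall>r<mc. \<forall>row<N*mp.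
        D row (k*mc + r) =
          (let t = nat ((int row - int (k*mp)) mod int (N*mp)) in if t < np*mp then f r t else 0)"
    unfolding conv_dict_def by blast
  define k where "k = c div mc"
  have k: "k < N" using c mc unfolding k_def by (simp add: div_less_iff_less_mult)
  have ck: "c = k * mc + c mod mc" unfolding k_def by simp
  define t where "t = nat ((int row - int (k*mp)) mod int (N*mp))"
  have t: "t < np * mp"
    using f k row nz mc ck unfolding t_def Let_def by (metis mod_less_divisor not_one_le_zero not_gr0)
  have Npos: "N * mp > 0" using row by (metis gr_zeroI less_nat_zero_code)
  have "int t = (int row - int (k*mp)) mod int (N*mp)" unfolding t_def using Npos by simp
  hence "int row mod int (N*mp) = (int (k*mp) + int t) mod int (N*mp)"
    by (metis add.commute diff_add_cancel mod_add_right_eq)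
  moreover have "int row mod int (N*mp) = int row" using row by (metis mod_less of_nat_mod)
  ultimately have "int row = int ((k*mp + t) mod (N*mp))" by (simp add: zmod_int)
  hence "row = (k*mp + t) mod (N*mp)" by simp
  moreover have "(k*mp + t) mod (N*mp) = mp * ((k*mp + t) div mp mod N) + (k*mp + t) mod mp"
    using mod_mult2_eq[of "k*mp + t" mp N] by (simp add: mult.commute)
  ultimately have "row div mp = (k + t div mp) mod N" using mp by simp
  moreover have "t div mp < np" using t mp by (simp add: div_less_iff_less_mult)
  ultimately show ?thesis unfolding k_def by blast
qed

lemma conv_dict_support_subset_patch:
  assumes cd: "conv_dict N mp mc np D" and c: "c < N * mc" and row: "row < N * mp"
    and nz: "D row c \<noteq> 0" and mp: "mp \<ge> 1" and mc: "mc \<ge> 1"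
  shows "row \<in> patch N mp np (c div mc)"
proof -
  obtain d where d: "d < np" "row div mp = (c div mc + d) mod N"
    using conv_dict_nonzero_row[OF assms] by blast
  have "int (row div mp) = (int (c div mc) + int d) mod int N" using d by (simp add: zmod_int)
  moreover have "row div mp < N" using row mp by (simp add: div_less_iff_less_mult)
  ultimately show ?thesis unfolding patch_def coords_def cyc_window_def using row d(1)
    by (auto intro!: exI[of _ "int d"])
qed

lemma conv_dict_overlap_in_stripe:
  assumes cd: "conv_dict N mp mc np D" and c: "c < N * mc" and c': "c' < N * mc"
    and row: "row < N * mp" and nz: "D row c \<noteq> 0" and nz': "D row c' \<noteq> 0"
    and mp: "mp \<ge> 1" and mc: "mc \<ge> 1"
  shows "c' \<in> stripe N mc np (c div mc)"
proof -
  obtain d where d: "d < np" "row div mp = (c div mc + d) mod N"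
    using conv_dict_nonzero_row[OF cd c row nz mp mc] by blast
  obtain d' where d': "d' < np" "row div mp = (c' div mc + d') mod N"
    using conv_dict_nonzero_row[OF cd c' row nz' mp mc] by blast
  have k': "c' div mc < N" using c' mc by (simp add: div_less_iff_less_mult)
  have "(int (c div mc) + int d) mod int N = (int (c' div mc) + int d') mod int N"
    using d d' by (metis of_nat_add zmod_int)
  hence "(int (c div mc) + int d - int d') mod int N = (int (c' div mc) + int d' - int d') mod int N"
    by (metis mod_diff_left_eq)
  hence "int (c' div mc) = (int (c div mc) + (int d - int d')) mod int N"
    using k' by (simp add: algebra_simps)
  thus ?thesis unfolding stripe_def coords_def cyc_window_def using c' k' d(1) d'(1)
    by (auto intro!: exI[of _ "int d - int d'"])
qed

lemma conv_dict_inner_eq_0: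
  assumes cd: "conv_dict N mp mc np D" and c: "c < N * mc" and c': "c' < N * mc"
    and far: "c' \<notin> stripe N mc np (c div mc)" and mp: "mp \<ge> 1" and mc: "mc \<ge> 1"
  shows "(\<Sum>row<N*mp. D row c * D row c') = 0"
  using conv_dict_overlap_in_stripe[OF cd c c' _ _ _ mp mc] far by (intro sum.neutral) auto

lemma finite_abs_inner_set:
  "finite {\<bar>\<Sum>row<R. D row a * D row b\<bar> | a b. a < (C::nat) \<and> b < C \<and> a \<noteq> b}"
  by (rule finite_subset[OF _ finite_image_set2[of "\<lambda>a. a < C" "\<lambda>b. b < C"]]) auto

lemma mutual_coh_nonneg: "mutual_coh R C D \<ge> 0"
  unfolding mutual_coh_def using finite_abs_inner_set by (intro Max_ge) auto

lemma abs_inner_le_mutual_coh: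
  assumes "a < C" "b < C" "a \<noteq> b"
  shows "\<bar>\<Sum>row<R. D row a * D row b\<bar> \<le> mutual_coh R C D"
  unfolding mutual_coh_def using assms finite_abs_inner_set by (intro Max_ge) blast+

lemma finite_abs_nz_set: "finite {\<bar>V idx\<bar> | idx. idx < (L::nat) \<and> V idx \<noteq> 0}"
  by (rule finite_subset[OF _ finite_image_set[of "\<lambda>idx. idx < L"]]) auto

lemma abs_le_abs_max_nz: "c < L \<Longrightarrow> V c \<noteq> 0 \<Longrightarrow> \<bar>V c\<bar> \<le> abs_max_nz L V"
  unfolding abs_max_nz_def using finite_abs_nz_set by (intro Max_ge) blast+

lemma abs_min_nz_le_abs: "c < L \<Longrightarrow> V c \<noteq> 0 \<Longrightarrow> abs_min_nz L V \<le> \<bar>V c\<bar>"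
  unfolding abs_min_nz_def using finite_abs_nz_set by (intro Min_le) blast+

lemma abs_max_nz_nonneg: "\<exists>c<L. V c \<noteq> 0 \<Longrightarrow> abs_max_nz L V \<ge> 0"
  using abs_le_abs_max_nz by (meson abs_ge_zero order_trans)

lemma mem_own_stripe:
  assumes c: "c < N * m" and m: "m \<ge> 1" and n: "n \<ge> 1"
  shows "c \<in> stripe N m n (c div m)"
proof -
  have "c div m < N" using c m by (simp add: div_less_iff_less_mult)
  thus ?thesis using c n unfolding stripe_def coords_def cyc_window_def
    by (auto intro!: exI[of _ 0])
qed

lemma card_stripe_support_le_stripe_l0:
  "k < N \<Longrightarrow> card {idx \<in> stripe N m n k. V idx \<noteq> 0} \<le> stripe_l0 N m n V"
  unfolding stripe_l0_def by (intro Max_ge) auto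

lemma stripe_l0_pos:
  assumes "\<exists>c < N * m. V c \<noteq> 0" and m: "m \<ge> 1" and n: "n \<ge> 1"
  shows "stripe_l0 N m n V \<ge> 1"
proof -
  obtain c where c: "c < N * m" "V c \<noteq> 0" using assms(1) by blast
  define S where "S = {idx \<in> stripe N m n (c div m). V idx \<noteq> 0}"
  have k: "c div m < N" using c(1) m by (simp add: div_less_iff_less_mult)
  have "c \<in> S" unfolding S_def using mem_own_stripe[OF c(1) m n] c(2) by blast
  moreover have "finite S" unfolding S_def stripe_def coords_def by simp
  ultimately have "card S \<ge> 1" by (simp add: Suc_le_eq card_gt_0_iff) blast
  thus ?thesis using card_stripe_support_le_stripe_l0[OF k, of m n V] unfolding S_def by linarith
qed

lemma card_patch_support_le_patch_l0:
  "k < N \<Longrightarrow> card {idx \<in> patch N m n k. V idx \<noteq> 0} \<le> patch_l0 N m n V"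
  unfolding patch_l0_def by (intro Max_ge) auto

lemma patch_norm_le_patch_l2:
  "k < N \<Longrightarrow> sqrt (\<Sum>idx\<in>patch N m n k. (V idx)\<^sup>2) \<le> patch_l2 N m n V"
  unfolding patch_l2_def by (intro Max_ge) auto

lemma patch_l2_nonneg:
  assumes "N \<ge> 1"
  shows "patch_l2 N m n V \<ge> 0"
proof -
  have "0 \<le> sqrt (\<Sum>idx\<in>patch N m n 0. (V idx)\<^sup>2)" by (simp add: sum_nonneg)
  also have "\<dots> \<le> patch_l2 N m n V" using assms by (intro patch_norm_le_patch_l2) simp
  finally show ?thesis .
qed

lemma patch_l2_cong_abs:
  assumes "\<forall>idx < N * m. \<bar>U idx\<bar> = \<bar>V idx\<bar>"
  shows "patch_l2 N m n U = patch_l2 N m n V"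
proof -
  have "(U idx)\<^sup>2 = (V idx)\<^sup>2" if "idx \<in> patch N m n j" for idx j
    using assms that unfolding patch_def coords_def by (metis (mono_tags) mem_Collect_eq power2_abs)
  thus ?thesis unfolding patch_l2_def by (intro arg_cong[where f = Max] image_cong sum.cong) auto
qed

lemma patch_l2_le_sqrt_patch_l0:
  assumes N: "N \<ge> 1" and supp: "\<forall>c < N * m. h c \<noteq> 0 \<longleftrightarrow> g c \<noteq> 0"
    and pw: "\<forall>c < N * m. \<bar>g c - h c\<bar> \<le> B" and B: "B \<ge> 0"
  shows "patch_l2 N m n (\<lambda>c. g c - h c) \<le> sqrt (real (patch_l0 N m n g)) * B"
proof -
  have "sqrt (\<Sum>c\<in>patch N m n j. (g c - h c)\<^sup>2) \<le> sqrt (real (patch_l0 N m n g)) * B"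
    if j: "j < N" for j
  proof -
    define P where "P = patch N m n j"
    define S where "S = {c \<in> P. g c \<noteq> 0}"
    have PL: "P \<subseteq> {..<N * m}" unfolding P_def patch_def coords_def by auto
    hence finP: "finite P" using finite_subset by blast
    have "(\<Sum>c\<in>P. (g c - h c)\<^sup>2) = (\<Sum>c\<in>S. (g c - h c)\<^sup>2)"
      using supp PL finP unfolding S_def by (intro sum.mono_neutral_right) auto
    also have "\<dots> \<le> real (card S) * B\<^sup>2"
    proof (rule sum_bounded_above)
      fix c assume "c \<in> S"
      hence "\<bar>g c - h c\<bar> \<le> B" using pw PL unfolding S_def by auto
      thus "(g c - h c)\<^sup>2 \<le> B\<^sup>2" by (metis abs_ge_zero power2_abs power_mono)
    qed
    also have "\<dots> \<le> real (patch_l0 N m n g) * B\<^sup>2"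
      using card_patch_support_le_patch_l0[OF j, of m n g] unfolding S_def P_def
      by (intro mult_right_mono) auto
    finally have "sqrt (\<Sum>c\<in>P. (g c - h c)\<^sup>2) \<le> sqrt (real (patch_l0 N m n g) * B\<^sup>2)"
      by (rule real_sqrt_le_mono)
    thus ?thesis using B unfolding P_def by (simp add: real_sqrt_mult)
  qed
  thus ?thesis unfolding patch_l2_def using N
    by (intro Max.boundedI) (auto simp: lessThan_empty_iff bot_nat_def)
qed

section \<open>Correlating a noisy signal with the dictionary\<close>

lemma mat_tvec_model_plus_noise:
  assumes "\<forall>row<R. h row = mat_vec C D g row + e row"
  shows "mat_tvec R D h c = (\<Sum>c'<C. (\<Sum>row<R. D row c * D row c') * g c') + mat_tvec R D e c"
proof -
  have "mat_tvec R D h c = (\<Sum>row<R. D row c * mat_vec C D g row) + mat_tvec R D e c"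
    using assms unfolding mat_tvec_def by (simp add: algebra_simps sum.distrib)
  also have "(\<Sum>row<R. D row c * mat_vec C D g row) = (\<Sum>row<R. \<Sum>c'<C. D row c * D row c' * g c')"
    unfolding mat_vec_def by (simp add: sum_distrib_left mult.assoc)
  also have "\<dots> = (\<Sum>c'<C. (\<Sum>row<R. D row c * D row c') * g c')"
    by (subst sum.swap) (simp add: sum_distrib_right)
  finally show ?thesis .
qed

lemma abs_mat_tvec_le_patch_norm:
  assumes cd: "conv_dict N mp mc np D" and c: "c < N * mc" and mp: "mp \<ge> 1" and mc: "mc \<ge> 1"
  shows "\<bar>mat_tvec (N*mp) D e c\<bar> \<le> sqrt (\<Sum>row\<in>patch N mp np (c div mc). (e row)\<^sup>2)"
proof -
  define P where "P = patch N mp np (c div mc)"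
  have PR: "P \<subseteq> {..<N*mp}" unfolding P_def patch_def coords_def by auto
  have "mat_tvec (N*mp) D e c = (\<Sum>row\<in>P. D row c * e row)"
    unfolding mat_tvec_def using conv_dict_support_subset_patch[OF cd c _ _ mp mc] PR
    unfolding P_def by (intro sum.mono_neutral_right) auto
  moreover have "(\<Sum>row\<in>P. D row c * e row)\<^sup>2 \<le> (\<Sum>row\<in>P. (e row)\<^sup>2)"
  proof -
    have "(\<Sum>row\<in>P. (D row c)\<^sup>2) \<le> (\<Sum>row<N*mp. (D row c)\<^sup>2)"
      using PR by (intro sum_mono2) auto
    also have "\<dots> = 1" using cd c unfolding conv_dict_def by auto
    finally have "(\<Sum>row\<in>P. (D row c)\<^sup>2) * (\<Sum>row\<in>P. (e row)\<^sup>2) \<le> (\<Sum>row\<in>P. (e row)\<^sup>2)"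
      by (intro mult_left_le_one_le) (auto intro: sum_nonneg)
    with Cauchy_Schwarz_ineq_sum show ?thesis by (rule order_trans)
  qed
  ultimately show ?thesis unfolding P_def by (metis real_sqrt_abs real_sqrt_le_mono)
qed

lemma abs_interference_le:
  assumes cd: "conv_dict N mp mc np D" and c: "c < N * mc" and mp: "mp \<ge> 1" and mc: "mc \<ge> 1"
  shows "\<bar>\<Sum>c'\<in>{..<N*mc} - {c}. (\<Sum>row<N*mp. D row c * D row c') * g c'\<bar>
    \<le> real (card ({c' \<in> stripe N mc np (c div mc). g c' \<noteq> 0} - {c}))
       * mutual_coh (N*mp) (N*mc) D * abs_max_nz (N*mc) g"
    (is "\<bar>\<Sum>c'\<in>_. ?ip c' * g c'\<bar> \<le> real (card (?A - {c})) * ?\<mu> * ?Gmax")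
proof -
  have AL: "?A \<subseteq> {..<N*mc}" unfolding stripe_def coords_def by auto
  have "\<bar>\<Sum>c'\<in>{..<N*mc} - {c}. ?ip c' * g c'\<bar> \<le> (\<Sum>c'\<in>{..<N*mc} - {c}. \<bar>?ip c' * g c'\<bar>)"
    by (rule sum_abs)
  also have "\<dots> = (\<Sum>c'\<in>?A - {c}. \<bar>?ip c' * g c'\<bar>)"
    using conv_dict_inner_eq_0[OF cd c _ _ mp mc] AL by (intro sum.mono_neutral_right) auto
  also have "\<dots> \<le> real (card (?A - {c})) * (?\<mu> * ?Gmax)"
  proof (rule sum_bounded_above)
    fix c' assume c': "c' \<in> ?A - {c}"
    hence "\<bar>?ip c'\<bar> \<le> ?\<mu>" "\<bar>g c'\<bar> \<le> ?Gmax"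
      using AL c by (auto intro: abs_inner_le_mutual_coh abs_le_abs_max_nz)
    thus "\<bar>?ip c' * g c'\<bar> \<le> ?\<mu> * ?Gmax" by (simp add: abs_mult mult_mono mutual_coh_nonneg)
  qed
  finally show ?thesis by (simp add: mult.assoc)
qed

section \<open>One layer of soft thresholding\<close>

lemma soft_thr_eq_0_iff: "\<beta> \<ge> 0 \<Longrightarrow> soft_thr \<beta> x = 0 \<longleftrightarrow> \<bar>x\<bar> \<le> \<beta>"
  unfolding soft_thr_def by auto

lemma abs_soft_thr_sub_le: "\<beta> \<ge> 0 \<Longrightarrow> \<bar>soft_thr \<beta> x - x\<bar> \<le> \<beta>"
  unfolding soft_thr_def by auto

lemma abs_mat_tvec_sub_le:
  fixes D :: "nat \<Rightarrow> nat \<Rightarrow> real" and g gp hp :: "nat \<Rightarrow> real"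
  assumes cd: "conv_dict N mp mc np D" and c: "c < N*mc" and mp: "mp \<ge> 1" and mc: "mc \<ge> 1"
    and model: "\<forall>row < N*mp. gp row = mat_vec (N*mc) D g row"
    and err: "patch_l2 N mp np (\<lambda>row. gp row - hp row) \<le> ep"
  shows "\<bar>mat_tvec (N*mp) D hp c - g c\<bar>
    \<le> real (card ({c' \<in> stripe N mc np (c div mc). g c' \<noteq> 0} - {c}))
       * mutual_coh (N*mp) (N*mc) D * abs_max_nz (N*mc) g + ep"
proof -
  let ?e = "\<lambda>row. hp row - gp row"
  let ?ip = "\<lambda>c'. \<Sum>row<N*mp. D row c * D row c'"
  have k: "c div mc < N" using c mc by (simp add: div_less_iff_less_mult)
  have "\<bar>mat_tvec (N*mp) D ?e c\<bar> \<le> sqrt (\<Sum>row\<in>patch N mp np (c div mc). (?e row)\<^sup>2)"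
    using cd c mp mc by (rule abs_mat_tvec_le_patch_norm)
  also have "\<dots> = sqrt (\<Sum>row\<in>patch N mp np (c div mc). (gp row - hp row)\<^sup>2)"
    by (simp add: power2_commute)
  also have "\<dots> \<le> patch_l2 N mp np (\<lambda>row. gp row - hp row)"
    using k by (rule patch_norm_le_patch_l2)
  finally have noise: "\<bar>mat_tvec (N*mp) D ?e c\<bar> \<le> ep" using err by linarith
  have "\<forall>row<N*mp. hp row = mat_vec (N*mc) D g row + ?e row" using model by simp
  hence "mat_tvec (N*mp) D hp c = (\<Sum>c'<N*mc. ?ip c' * g c') + mat_tvec (N*mp) D ?e c"
    by (rule mat_tvec_model_plus_noise)
  also have "(\<Sum>c'<N*mc. ?ip c' * g c') = ?ip c * g c + (\<Sum>c'\<in>{..<N*mc} - {c}. ?ip c' * g c')"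
    using c by (simp add: sum.remove)
  also have "?ip c = 1" using cd c unfolding conv_dict_def by (simp add: power2_eq_square)
  finally show ?thesis using abs_interference_le[OF cd c mp mc, of g] noise by linarith
qed

lemma soft_thr_layer_recovery:
  fixes D :: "nat \<Rightarrow> nat \<Rightarrow> real" and g gp hp :: "nat \<Rightarrow> real"
  assumes N: "N \<ge> 1" and mp: "mp \<ge> 1" and mc: "mc \<ge> 1" and np: "np \<ge> 1"
    and cd: "conv_dict N mp mc np D"
    and model: "\<forall>row < N*mp. gp row = mat_vec (N*mc) D g row"
    and nz: "\<exists>c < N*mc. g c \<noteq> 0"
    and err: "patch_l2 N mp np (\<lambda>row. gp row - hp row) \<le> ep"
    and upper: "abs_min_nz (N*mc) g - (real (stripe_l0 N mc np g) - 1)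
                  * mutual_coh (N*mp) (N*mc) D * abs_max_nz (N*mc) g - ep > \<beta>"
    and lower: "\<beta> > real (stripe_l0 N mc np g) * mutual_coh (N*mp) (N*mc) D * abs_max_nz (N*mc) g + ep"
    and c: "c < N*mc"
  shows "(soft_thr \<beta> (mat_tvec (N*mp) D hp c) \<noteq> 0 \<longleftrightarrow> g c \<noteq> 0)
    \<and> \<bar>g c - soft_thr \<beta> (mat_tvec (N*mp) D hp c)\<bar>
        \<le> ep + mutual_coh (N*mp) (N*mc) D * (real (stripe_l0 N mc np g) - 1) * abs_max_nz (N*mc) g + \<beta>"
proof -
  define \<mu> where "\<mu> = mutual_coh (N*mp) (N*mc) D"
  define s where "s = stripe_l0 N mc np g"
  define Gmax where "Gmax = abs_max_nz (N*mc) g"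
  define z where "z = mat_tvec (N*mp) D hp c"
  define A where "A = {c' \<in> stripe N mc np (c div mc). g c' \<noteq> 0}"
  have perturb: "\<bar>z - g c\<bar> \<le> real (card (A - {c})) * \<mu> * Gmax + ep"
    unfolding z_def A_def \<mu>_def Gmax_def using cd c mp mc model err by (rule abs_mat_tvec_sub_le)
  have upper': "abs_min_nz (N*mc) g - (real s - 1) * \<mu> * Gmax - ep > \<beta>"
    using upper unfolding \<mu>_def s_def Gmax_def .
  have lower': "\<beta> > real s * \<mu> * Gmax + ep"
    using lower unfolding \<mu>_def s_def Gmax_def .
  have \<mu>: "\<mu> \<ge> 0" unfolding \<mu>_def by (rule mutual_coh_nonneg)
  have Gmax: "Gmax \<ge> 0" unfolding Gmax_def using nz by (rule abs_max_nz_nonneg)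
  have s: "s \<ge> 1" unfolding s_def using nz mc np by (rule stripe_l0_pos)
  have ep: "ep \<ge> 0" using patch_l2_nonneg[OF N] err by (rule order_trans)
  have interference: "\<mu> * (real s - 1) * Gmax \<ge> 0" using s \<mu> Gmax by simp
  have "real s * \<mu> * Gmax \<ge> 0" using \<mu> Gmax by simp
  hence \<beta>: "\<beta> \<ge> 0" using lower' ep by linarith
  have finA: "finite A" unfolding A_def stripe_def coords_def by simp
  have cardA: "card A \<le> s" unfolding A_def s_def using c mc
    by (intro card_stripe_support_le_stripe_l0) (simp add: div_less_iff_less_mult)
  have "(soft_thr \<beta> z \<noteq> 0 \<longleftrightarrow> g c \<noteq> 0) \<and> \<bar>g c - soft_thr \<beta> z\<bar> \<le> ep + \<mu> * (real s - 1) * Gmax + \<beta>"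
  proof (cases "g c = 0")
    case True
    have "real (card (A - {c})) \<le> real s" using le_trans[OF card_Diff1_le cardA] by simp
    hence "real (card (A - {c})) * \<mu> * Gmax \<le> real s * \<mu> * Gmax"
      using \<mu> Gmax by (intro mult_right_mono) auto
    hence "\<bar>z\<bar> \<le> \<beta>" using perturb True lower' by simp
    hence "soft_thr \<beta> z = 0" using \<beta> by (simp add: soft_thr_eq_0_iff)
    thus ?thesis using True ep \<beta> interference by simp
  next
    case False
    have "c \<in> A" unfolding A_def using mem_own_stripe[OF c mc np] False by blast
    hence "card (A - {c}) + 1 \<le> s" using card.remove[OF finA] cardA by simp
    hence "real (card (A - {c})) \<le> real s - 1" by linarith
    hence "real (card (A - {c})) * \<mu> * Gmax \<le> (real s - 1) * \<mu> * Gmax"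
      using \<mu> Gmax by (intro mult_right_mono) auto
    hence close: "\<bar>z - g c\<bar> \<le> (real s - 1) * \<mu> * Gmax + ep" using perturb by linarith
    have "abs_min_nz (N*mc) g \<le> \<bar>g c\<bar>" using c False by (rule abs_min_nz_le_abs)
    hence "\<bar>z\<bar> > \<beta>" using close upper' by linarith
    hence "soft_thr \<beta> z \<noteq> 0" using \<beta> by (simp add: soft_thr_eq_0_iff)
    moreover have "\<bar>soft_thr \<beta> z - z\<bar> \<le> \<beta>" using \<beta> by (rule abs_soft_thr_sub_le)
    moreover have "\<mu> * (real s - 1) * Gmax = (real s - 1) * \<mu> * Gmax" by simp
    ultimately show ?thesis using close False by linarith
  qed
  thus ?thesis unfolding z_def \<mu>_def s_def Gmax_def .
qed

lemma soft_thr_layer_patch_error: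
  fixes D :: "nat \<Rightarrow> nat \<Rightarrow> real" and g gp hp :: "nat \<Rightarrow> real"
  assumes N: "N \<ge> 1" and mp: "mp \<ge> 1" and mc: "mc \<ge> 1" and np: "np \<ge> 1"
    and cd: "conv_dict N mp mc np D"
    and model: "\<forall>row < N*mp. gp row = mat_vec (N*mc) D g row"
    and nz: "\<exists>c < N*mc. g c \<noteq> 0"
    and err: "patch_l2 N mp np (\<lambda>row. gp row - hp row) \<le> ep"
    and upper: "abs_min_nz (N*mc) g - (real (stripe_l0 N mc np g) - 1)
                  * mutual_coh (N*mp) (N*mc) D * abs_max_nz (N*mc) g - ep > \<beta>"
    and lower: "\<beta> > real (stripe_l0 N mc np g) * mutual_coh (N*mp) (N*mc) D * abs_max_nz (N*mc) g + ep"
  shows "(\<forall>c < N*mc. soft_thr \<beta> (mat_tvec (N*mp) D hp c) \<noteq> 0 \<longleftrightarrow> g c \<noteq> 0)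
    \<and> patch_l2 N mc nc (\<lambda>c. g c - soft_thr \<beta> (mat_tvec (N*mp) D hp c))
      \<le> sqrt (real (patch_l0 N mc nc g))
         * (ep + mutual_coh (N*mp) (N*mc) D * (real (stripe_l0 N mc np g) - 1) * abs_max_nz (N*mc) g + \<beta>)"
proof -
  note entrywise = soft_thr_layer_recovery[OF assms]
  obtain c where "c < N*mc" "g c \<noteq> 0" using nz by blast
  hence "ep + mutual_coh (N*mp) (N*mc) D * (real (stripe_l0 N mc np g) - 1) * abs_max_nz (N*mc) g + \<beta> \<ge> 0"
    using entrywise by (meson abs_ge_zero order_trans)
  with entrywise show ?thesis by (auto intro!: patch_l2_le_sqrt_patch_l0[OF N])
qed

theorem theorem4:
  fixes N K :: nat
    and m n :: "nat \<Rightarrow> nat"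
    and D :: "nat \<Rightarrow> nat \<Rightarrow> nat \<Rightarrow> real"
    and G Ghat :: "nat \<Rightarrow> nat \<Rightarrow> real"
    and X Y E :: "nat \<Rightarrow> real"
    and \<beta> eps :: "nat \<Rightarrow> real"
    and eps0 :: real
  assumes N_pos: "N \<ge> 1"
    and m0: "m 0 = 1"
    and m_pos: "\<forall>i\<le>K. m i \<ge> 1"
    and n_range: "\<forall>i\<le>K. 1 \<le> n i \<and> n i \<le> N"
    and dict: "\<forall>i. 1 \<le> i \<and> i \<le> K \<longrightarrow> conv_dict N (m (i-1)) (m i) (n (i-1)) (D i)"
    and G0: "G 0 = X"
    and model: "\<forall>i. 1 \<le> i \<and> i \<le> K \<longrightarrow>
                  (\<forall>row < N * m (i-1). G (i-1) row = mat_vec (N * m i) (D i) (G i) row)"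
    and nonzero: "\<forall>i. 1 \<le> i \<and> i \<le> K \<longrightarrow> (\<exists>idx < N * m i. G i idx \<noteq> 0)"
    and noisy: "\<forall>row < N. Y row = X row + E row"
    and noise_bd: "patch_l2 N 1 (n 0) E \<le> eps0"
    and Ghat0: "Ghat 0 = Y"
    and Ghat_rec: "\<forall>i. 1 \<le> i \<and> i \<le> K \<longrightarrow>
                  Ghat i = (\<lambda>c. soft_thr (\<beta> i) (mat_tvec (N * m (i-1)) (D i) (Ghat (i-1)) c))"
    and eps_0: "eps 0 = eps0"
    and eps_rec: "\<forall>i. 1 \<le> i \<and> i \<le> K \<longrightarrow>
                  eps i = sqrt (real (patch_l0 N (m i) (n i) (G i))) *
                    (eps (i-1) + mutual_coh (N * m (i-1)) (N * m i) (D i) *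
                       (real (stripe_l0 N (m i) (n (i-1)) (G i)) - 1) * abs_max_nz (N * m i) (G i)
                     + \<beta> i)"
    and cond_a: "\<forall>i. 1 \<le> i \<and> i \<le> K \<longrightarrow>
                  real (stripe_l0 N (m i) (n (i-1)) (G i))
                  < 1/2 * (1 + 1 / mutual_coh (N * m (i-1)) (N * m i) (D i) *
                              (abs_min_nz (N * m i) (G i) / abs_max_nz (N * m i) (G i)))
                    - 1 / mutual_coh (N * m (i-1)) (N * m i) (D i) *
                              (eps (i-1) / abs_max_nz (N * m i) (G i))"
    and cond_b: "\<forall>i. 1 \<le> i \<and> i \<le> K \<longrightarrow>
                  abs_min_nz (N * m i) (G i)
                    - (real (stripe_l0 N (m i) (n (i-1)) (G i)) - 1) *
                       mutual_coh (N * m (i-1)) (N * m i) (D i) * abs_max_nz (N * m i) (G i)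
                    - eps (i-1) > \<beta> i
                  \<and> \<beta> i > real (stripe_l0 N (m i) (n (i-1)) (G i)) *
                       mutual_coh (N * m (i-1)) (N * m i) (D i) * abs_max_nz (N * m i) (G i)
                    + eps (i-1)"
  shows "\<forall>i. 1 \<le> i \<and> i \<le> K \<longrightarrow>
           (\<forall>idx < N * m i. (Ghat i idx \<noteq> 0 \<longleftrightarrow> G i idx \<noteq> 0))
           \<and> patch_l2 N (m i) (n i) (\<lambda>idx. G i idx - Ghat i idx) \<le> eps i"
proof -
  have layer: "(\<forall>idx < N * m i. (Ghat i idx \<noteq> 0 \<longleftrightarrow> G i idx \<noteq> 0))
      \<and> patch_l2 N (m i) (n i) (\<lambda>idx. G i idx - Ghat i idx) \<le> eps i"
    if i: "1 \<le> i" "i \<le> K"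
      and prev: "patch_l2 N (m (i-1)) (n (i-1)) (\<lambda>idx. G (i-1) idx - Ghat (i-1) idx) \<le> eps (i-1)"
    for i
    using soft_thr_layer_patch_error[where mc = "m i" and D = "D i" and g = "G i" and \<beta> = "\<beta> i"
        and nc = "n i", OF N_pos _ _ _ _ _ _ prev] m_pos n_range dict model nonzero cond_b
      Ghat_rec eps_rec i
    by simp
  have bound: "patch_l2 N (m i) (n i) (\<lambda>idx. G i idx - Ghat i idx) \<le> eps i" if "i \<le> K" for i
    using that
  proof (induction i)
    case 0
    have "patch_l2 N (m 0) (n 0) (\<lambda>idx. G 0 idx - Ghat 0 idx) = patch_l2 N 1 (n 0) E"
      unfolding m0 G0 Ghat0 using noisy by (intro patch_l2_cong_abs) simp
    thus ?case using noise_bd eps_0 by simp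
  next
    case (Suc i)
    thus ?case using layer[of "Suc i"] by simp
  qed
  show ?thesis by (intro allI impI layer) (auto intro: bound)
qed

end
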